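(* Let $A$ be a finite set, $h\ge0$, and let $P$ be a probability measure on $(A^{\mathbb{Z}},\mathfrak{A}^{\mathbb{Z}})$ satisfying condition (B* ) with respect to $h$. Then for every $\varepsilon>0$ there exist subsets $\overline{C}_\varepsilon^{(n)}\subseteq A^{(n)}$, $n\in\mathbb{N}$, and a number $\overline{N}(\varepsilon)$ such that properties (1)–(4) of condition (B* ) hold for $\{\overline{C}_\varepsilon^{(n)}\}$ and $\overline N(\varepsilon)$, and moreover the full asymptotic equipartition property holds: $P^{(n)}(\mathbf{x})\in(e^{-n(h+\varepsilon)},e^{-n(h-\varepsilon)})$ for all $n\ge\overline{N}(\varepsilon)$ and all $\mathbf{x}\in\overline{C}_\varepsilon^{(n)}$.
   Context: $\mathfrak{A}^{\mathbb{Z}}$ is the $\sigma$-field on $A^{\mathbb{Z}}$ generated by cylinder sets. For $n\ge 1$, $A^{(n)}:=\prod_{i=1}^n A$ and $P^{(n)}$ denotes the marginal of $P$ on the coordinates $1,\dots,n$. For $\mathbf{x}=(x_i)_{i=1}^n$ let $\mathbf{x}_\flat:=(x_i)_{i=1}^{n-1}$, and for $C\subseteq A^{(n+1)}$ let $C_\flat:=\{\mathbf{x}_\flat:\mathbf{x}\in C\}$. Condition (B* ) w.r.t. $h$: for every $\varepsilon>0$ there exist subsets $C_\varepsilon^{(n)}\subseteq A^{(n)}$, $n\in\mathbb{N}$, and a number $N(\varepsilon)$ such that (1) $C_\varepsilon^{(n)}=(C_\varepsilon^{(n+1)})_\flat$ for all $n\ge1$; (2) $\#C_\varepsilon^{(n)}\in(e^{n(h-\varepsilon)},e^{n(h+\varepsilon)})$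 for $n\ge N(\varepsilon)$; (3) $P^{(n)}(\mathbf{x})<e^{-n(h-\varepsilon)}$ for all $n\ge N(\varepsilon)$ and all $\mathbf{x}\in C_\varepsilon^{(n)}$; (4) $P^{(n)}(C_\varepsilon^{(n)})>1-\varepsilon$ for all $n\ge1$. *)

theory Defs
  imports "HOL-Probability.Probability"
begin

text \<open>Words of length n over A: the set A^(n), coordinates 1..n stored as list positions 0..n-1.\<close>
definition words :: "'a set \<Rightarrow> nat \<Rightarrow> 'a list set" where
  "words A n = {xs. length xs = n \<and> set xs \<subseteq> A}"

definition window :: "(int \<Rightarrow> 'a) \<Rightarrow> nat \<Rightarrow> 'a list" where
  "window \<omega> n = map (\<lambda>i. \<omega> (int i + 1)) [0..<n]"

definition marg :: "(int \<Rightarrow> 'a) measure \<Rightarrow> nat \<Rightarrow> 'a list set \<Rightarrow> real" where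
  "marg P n C = measure P {\<omega> \<in> space P. window \<omega> n \<in> C}"

definition Bstar_props ::
  "(int \<Rightarrow> 'a) measure \<Rightarrow> 'a set \<Rightarrow> real \<Rightarrow> real \<Rightarrow> (nat \<Rightarrow> 'a list set) \<Rightarrow> nat \<Rightarrow> bool" where
  "Bstar_props P A h \<epsilon> C N \<longleftrightarrow>
     (\<forall>n\<ge>1. C n \<subseteq> words A n) \<and>
     (\<forall>n\<ge>1. C n = butlast ` C (Suc n)) \<and>
     (\<forall>n\<ge>N. n \<ge> 1 \<longrightarrow> exp (real n * (h - \<epsilon>)) < real (card (C n)) \<and>
                         real (card (C n)) < exp (real n * (h + \<epsilon>))) \<and>
     (\<forall>n\<ge>N. n \<ge> 1 \<longrightarrow> (\<forall>x\<in>C n. marg P n {x} < exp (- real n * (h - \<epsilon>)))) \<and>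
     (\<forall>n\<ge>1. marg P n (C n) > 1 - \<epsilon>)"

definition condition_Bstar :: "(int \<Rightarrow> 'a) measure \<Rightarrow> 'a set \<Rightarrow> real \<Rightarrow> bool" where
  "condition_Bstar P A h \<longleftrightarrow> (\<forall>\<epsilon>>0. \<exists>C N. Bstar_props P A h \<epsilon> C N)"

end

theory Submission
  imports Defs
begin

text \<open>
  Take the (B*) family \<open>C\<close> for a small \<open>\<delta>\<close> and keep only the sample paths all of whose
  windows lie in \<open>C\<close> and, from some length \<open>M\<close> on, have probability above
  \<open>exp (-n (h + \<epsilon>))\<close>; the windows of these paths form a family \<open>D\<close> that is prefix-closed by
  construction. Because \<open>C\<close> is prefix-closed, the events "the path has left \<open>C\<close> by time \<open>n\<close>"
  increase, so a path leaves \<open>C\<close> with probability at most \<open>\<delta>\<close>. A light window of length \<open>n\<close>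
  in \<open>C\<close> is met with probability at most \<open>#C(n) exp (-n (h + \<epsilon>)) \<le> exp (-n (\<epsilon> - \<delta>))\<close>, which
  is summable, so for large \<open>M\<close> the family \<open>D\<close> keeps mass at least \<open>1 - 2\<delta>\<close>. This mass,
  together with the upper bound on the probability of single words, forces \<open>#D(n)\<close> above
  \<open>exp (n (h - \<epsilon>))\<close>.
\<close>

lemma finite_words: "finite A \<Longrightarrow> finite (words A n)"
  unfolding words_def using finite_lists_length_eq[of A n] by (simp add: conj_commute)

lemma butlast_window_Suc: "butlast (window \<omega> (Suc n)) = window \<omega> n"
  by (simp add: window_def)

lemma window_eq_iff: "window \<omega> n = x \<longleftrightarrow> length x = n \<and> (\<forall>i\<in>{..<n}. \<omega> (int i + 1) = x ! i)"
  by (auto simp: window_def list_eq_iff_nth_eq)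

lemma butlast_image_windows:
  "butlast ` (\<lambda>\<omega>. window \<omega> (Suc n)) ` T = (\<lambda>\<omega>. window \<omega> n) ` T"
  by (simp add: image_image butlast_window_Suc)

locale prob_on_sequences = prob_space P
  for P :: "(int \<Rightarrow> 'a) measure" +
  fixes A :: "'a set"
  assumes finite_alphabet: "finite A"
    and sets_P: "sets P = sets (PiM (UNIV :: int set) (\<lambda>_. count_space A))"
    and space_P: "space P = space (PiM (UNIV :: int set) (\<lambda>_. count_space A))"
begin

lemma window_in_words: "\<omega> \<in> space P \<Longrightarrow> window \<omega> n \<in> words A n"
  using space_P by (auto simp: words_def window_def space_PiM PiE_iff)

lemma sets_coordinate_eq: "{\<omega> \<in> space P. \<omega> j = a} \<in> sets P"
proof -
  have meas: "(\<lambda>\<omega>. \<omega> j) \<in> measurable P (count_space A)"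
    using measurable_component_singleton[of j UNIV "\<lambda>_. count_space A"]
    by (simp add: measurable_cong_sets[OF sets_P refl])
  have "(\<lambda>\<omega>. \<omega> j) -` ({a} \<inter> A) \<inter> space P \<in> sets P"
    by (rule measurable_sets[OF meas]) simp
  moreover have "(\<lambda>\<omega>. \<omega> j) -` ({a} \<inter> A) \<inter> space P = {\<omega> \<in> space P. \<omega> j = a}"
    using measurable_space[OF meas] by auto
  ultimately show ?thesis by simp
qed

lemma sets_window_eq: "{\<omega> \<in> space P. window \<omega> n = x} \<in> sets P"
  unfolding window_eq_iff
  by (intro sets.sets_Collect_conj sets.sets_Collect_const sets.sets_Collect_finite_All
      sets_coordinate_eq finite_lessThan)

lemma sets_window_pred: "{\<omega> \<in> space P. Q (window \<omega> n)} \<in> sets P"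
proof -
  have "{\<omega> \<in> space P. Q (window \<omega> n)} =
      (\<Union>x \<in> {x \<in> words A n. Q x}. {\<omega> \<in> space P. window \<omega> n = x})"
    using window_in_words by auto
  then show ?thesis
    using finite_words[OF finite_alphabet] sets_window_eq by auto
qed

lemma marg_eq_sum:
  assumes "finite S"
  shows "marg P n S = (\<Sum>x\<in>S. marg P n {x})"
proof -
  have "{\<omega> \<in> space P. window \<omega> n \<in> S} = (\<Union>x\<in>S. {\<omega> \<in> space P. window \<omega> n = x})"
    by auto
  moreover have "prob (\<Union>x\<in>S. {\<omega> \<in> space P. window \<omega> n = x}) =
      (\<Sum>x\<in>S. prob {\<omega> \<in> space P. window \<omega> n = x})"
    using assms sets_window_eq
    by (intro finite_measure_finite_Union) (auto simp: disjoint_family_on_def)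
  ultimately show ?thesis
    by (simp add: marg_def)
qed

lemma marg_le_card_mult:
  assumes "finite S" "\<And>x. x \<in> S \<Longrightarrow> marg P n {x} \<le> b"
  shows "marg P n S \<le> real (card S) * b"
  using marg_eq_sum[OF assms(1)] sum_mono[of S "\<lambda>x. marg P n {x}" "\<lambda>_. b"] assms(2) by simp

lemma card_gt_of_marg_gt:
  assumes "finite S"
    and "\<And>x. x \<in> S \<Longrightarrow> marg P n {x} < exp (- real n * (h - \<delta>))"
    and "exp (- real n * (\<epsilon> - \<delta>)) < marg P n S"
  shows "exp (real n * (h - \<epsilon>)) < real (card S)"
proof -
  have "exp (real n * (h - \<epsilon>)) = exp (real n * (h - \<delta>)) * exp (- real n * (\<epsilon> - \<delta>))"
    by (simp add: exp_add[symmetric] algebra_simps)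
  also have "\<dots> < exp (real n * (h - \<delta>)) * marg P n S"
    using assms(3) by simp
  also have "\<dots> \<le> exp (real n * (h - \<delta>)) * (real (card S) * exp (- real n * (h - \<delta>)))"
    using assms(1,2) by (intro mult_left_mono marg_le_card_mult less_imp_le) auto
  also have "\<dots> = real (card S)"
    by (simp add: exp_minus)
  finally show ?thesis .
qed

definition paths_through :: "(nat \<Rightarrow> 'a list set) \<Rightarrow> (int \<Rightarrow> 'a) set" where
  "paths_through G = {\<omega> \<in> space P. \<forall>n\<ge>1. window \<omega> n \<in> G n}"

lemma sets_paths_through: "paths_through G \<in> sets P"
  unfolding paths_through_def
  by (intro sets.sets_Collect_countable_All sets.sets_Collect_imp sets.sets_Collect_const
      sets_window_pred)

lemma windows_paths_through_subset: "1 \<le> n \<Longrightarrow> (\<lambda>\<omega>. window \<omega> n) ` paths_through G \<subseteq> G n"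
  by (auto simp: paths_through_def)

lemma prob_paths_through_le_marg:
  "prob (paths_through G) \<le> marg P n ((\<lambda>\<omega>. window \<omega> n) ` paths_through G)"
  unfolding marg_def
  by (intro finite_measure_mono sets_window_pred) (auto simp: paths_through_def)

lemma prob_exit_prefix_closed_le:
  assumes prefix_closed: "\<And>n. 1 \<le> n \<Longrightarrow> butlast ` C (Suc n) \<subseteq> C n"
    and large: "\<And>n. 1 \<le> n \<Longrightarrow> 1 - \<delta> < marg P n (C n)"
  shows "prob {\<omega> \<in> space P. \<exists>n\<ge>1. window \<omega> n \<notin> C n} \<le> \<delta>"
proof -
  define E where "E i = {\<omega> \<in> space P. window \<omega> (Suc i) \<notin> C (Suc i)}" for i
  have "E i \<in> sets P" for i
    unfolding E_def by (rule sets_window_pred[of "\<lambda>x. x \<notin> C (Suc i)"])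
  then have E_sets: "range E \<subseteq> sets P"
    by blast
  have "incseq E"
  proof (rule incseq_SucI)
    fix i
    have "window \<omega> (Suc i) \<in> C (Suc i)" if "window \<omega> (Suc (Suc i)) \<in> C (Suc (Suc i))" for \<omega>
    proof -
      have "butlast (window \<omega> (Suc (Suc i))) \<in> C (Suc i)"
        using prefix_closed[of "Suc i"] that by auto
      then show ?thesis
        by (simp add: butlast_window_Suc)
    qed
    then show "E i \<subseteq> E (Suc i)" by (auto simp: E_def)
  qed
  moreover have E_le: "prob (E i) \<le> \<delta>" for i
  proof -
    have "E i = space P - {\<omega> \<in> space P. window \<omega> (Suc i) \<in> C (Suc i)}"
      by (auto simp: E_def)
    then show ?thesis
      using prob_compl[OF sets_window_pred[of "\<lambda>x. x \<in> C (Suc i)"]] large[of "Suc i"]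
      by (simp add: marg_def)
  qed
  ultimately have "prob (\<Union>(range E)) \<le> \<delta>"
    by (intro LIMSEQ_le_const2[OF finite_Lim_measure_incseq[OF E_sets]]) auto
  moreover have "{\<omega> \<in> space P. \<exists>n\<ge>1. window \<omega> n \<notin> C n} = \<Union>(range E)"
    unfolding E_def by (auto simp: Suc_le_eq gr0_conv_Suc)
  ultimately show ?thesis by simp
qed

lemma prob_light_windows_le:
  assumes finite: "\<And>n. M \<le> n \<Longrightarrow> finite (C n)"
    and nonneg: "\<And>n. M \<le> n \<Longrightarrow> 0 \<le> a n"
    and geometric: "\<And>n. M \<le> n \<Longrightarrow> real (card (C n)) * a n \<le> q ^ n"
    and q: "0 \<le> q" "q < 1"
  shows "prob {\<omega> \<in> space P. \<exists>n\<ge>M. window \<omega> n \<in> C n \<and> marg P n {window \<omega> n} \<le> a n}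
           \<le> q ^ M / (1 - q)"
proof -
  define L where "L k = {\<omega> \<in> space P. window \<omega> (M + k) \<in> C (M + k) \<and>
                                       marg P (M + k) {window \<omega> (M + k)} \<le> a (M + k)}" for k
  have "L k \<in> sets P" for k
    unfolding L_def
    by (rule sets_window_pred[of "\<lambda>x. x \<in> C (M + k) \<and> marg P (M + k) {x} \<le> a (M + k)"])
  then have L_sets: "range L \<subseteq> sets P"
    by blast
  have L_le: "prob (L k) \<le> q ^ M * q ^ k" for k
  proof -
    let ?S = "{x \<in> C (M + k). marg P (M + k) {x} \<le> a (M + k)}"
    have "prob (L k) = marg P (M + k) ?S"
      by (simp add: L_def marg_def)
    also have "\<dots> \<le> real (card ?S) * a (M + k)"
      using finite[of "M + k"] by (intro marg_le_card_mult) auto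
    also have "\<dots> \<le> real (card (C (M + k))) * a (M + k)"
      using finite[of "M + k"] nonneg[of "M + k"] by (intro mult_right_mono of_nat_mono card_mono) auto
    also have "\<dots> \<le> q ^ M * q ^ k"
      using geometric[of "M + k"] by (simp add: power_add)
    finally show ?thesis .
  qed
  have summable: "summable (\<lambda>k. q ^ M * q ^ k)"
    using q by (intro summable_mult summable_geometric) simp
  have L_summable: "summable (\<lambda>k. prob (L k))"
    by (rule summable_comparison_test[OF _ summable]) (use L_le in auto)
  have "{\<omega> \<in> space P. \<exists>n\<ge>M. window \<omega> n \<in> C n \<and> marg P n {window \<omega> n} \<le> a n}
      = \<Union>(range L)"
    by (auto simp: L_def le_iff_add)
  then have "prob {\<omega> \<in> space P. \<exists>n\<ge>M. window \<omega> n \<in> C n \<and> marg P n {window \<omega> n} \<le> a n}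
      = prob (\<Union>(range L))"
    by simp
  also have "\<dots> \<le> (\<Sum>k. prob (L k))"
    by (rule finite_measure_subadditive_countably[OF L_sets L_summable])
  also have "\<dots> \<le> (\<Sum>k. q ^ M * q ^ k)"
    by (rule suminf_le[OF L_le L_summable summable])
  also have "\<dots> = q ^ M / (1 - q)"
    using q by (simp add: suminf_mult suminf_geometric)
  finally show ?thesis .
qed

lemma prob_paths_through_heavy_ge:
  assumes "\<And>n. 1 \<le> n \<Longrightarrow> butlast ` C (Suc n) \<subseteq> C n"
    and "\<And>n. 1 \<le> n \<Longrightarrow> 1 - \<delta> < marg P n (C n)"
    and "\<And>n. M \<le> n \<Longrightarrow> finite (C n)"
    and "\<And>n. M \<le> n \<Longrightarrow> 0 \<le> a n"
    and "\<And>n. M \<le> n \<Longrightarrow> real (card (C n)) * a n \<le> q ^ n"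
    and "0 \<le> q" "q < 1"
  shows "1 - \<delta> - q ^ M / (1 - q)
           \<le> prob (paths_through (\<lambda>n. {x \<in> C n. M \<le> n \<longrightarrow> a n < marg P n {x}}))"
proof -
  let ?exit = "{\<omega> \<in> space P. \<exists>n\<ge>1. window \<omega> n \<notin> C n}"
  let ?light = "{\<omega> \<in> space P. \<exists>n\<ge>M. window \<omega> n \<in> C n \<and> marg P n {window \<omega> n} \<le> a n}"
  let ?T = "paths_through (\<lambda>n. {x \<in> C n. M \<le> n \<longrightarrow> a n < marg P n {x}})"
  have sets: "?exit \<in> sets P" "?light \<in> sets P"
    by (intro sets.sets_Collect_countable_Ex sets.sets_Collect_conj sets.sets_Collect_const
        sets_window_pred)+
  have "space P - ?T \<subseteq> ?exit \<union> ?light"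
    unfolding paths_through_def by (blast intro: leI)
  then have "prob (space P - ?T) \<le> prob (?exit \<union> ?light)"
    using sets by (intro finite_measure_mono sets.Un)
  also have "\<dots> \<le> prob ?exit + prob ?light"
    using sets by (rule measure_Un_le)
  also have "\<dots> \<le> \<delta> + q ^ M / (1 - q)"
    by (intro add_mono prob_exit_prefix_closed_le[OF assms(1,2)]
        prob_light_windows_le[OF assms(3-7)])
  finally show ?thesis
    using prob_compl[OF sets_paths_through] by simp
qed

lemma Bstar_props_subfamily:
  assumes C: "Bstar_props P A h \<delta> C N"
    and D_C: "\<And>n. 1 \<le> n \<Longrightarrow> D n \<subseteq> C n"
    and D_prefix: "\<And>n. 1 \<le> n \<Longrightarrow> D n = butlast ` D (Suc n)"
    and D_large: "\<And>n. 1 \<le> n \<Longrightarrow> 1 - \<epsilon> < marg P n (D n)"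
    and D_mass: "\<And>n. M \<le> n \<Longrightarrow> exp (- real n * (\<epsilon> - \<delta>)) < marg P n (D n)"
    and "N \<le> M" "\<delta> \<le> \<epsilon>"
  shows "Bstar_props P A h \<epsilon> D M"
proof -
  have C_words: "\<And>n. 1 \<le> n \<Longrightarrow> C n \<subseteq> words A n"
    and C_card: "\<And>n. N \<le> n \<Longrightarrow> 1 \<le> n \<Longrightarrow> real (card (C n)) < exp (real n * (h + \<delta>))"
    and C_point: "\<And>n x. N \<le> n \<Longrightarrow> 1 \<le> n \<Longrightarrow> x \<in> C n \<Longrightarrow>
                    marg P n {x} < exp (- real n * (h - \<delta>))"
    using C unfolding Bstar_props_def by blast+
  have D_finite: "\<And>n. 1 \<le> n \<Longrightarrow> finite (D n)"
    using D_C C_words finite_words[OF finite_alphabet] by (meson finite_subset)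
  have D_point_\<delta>: "marg P n {x} < exp (- real n * (h - \<delta>))" if "M \<le> n" "1 \<le> n" "x \<in> D n" for n x
    using C_point[of n x] D_C[of n] \<open>N \<le> M\<close> that by auto
  have D_point: "marg P n {x} < exp (- real n * (h - \<epsilon>))" if "M \<le> n" "1 \<le> n" "x \<in> D n" for n x
  proof -
    have "marg P n {x} < exp (- real n * (h - \<delta>))"
      using D_point_\<delta> that .
    also have "\<dots> \<le> exp (- real n * (h - \<epsilon>))"
      using \<open>\<delta> \<le> \<epsilon>\<close> by (simp add: mult_left_mono)
    finally show ?thesis .
  qed
  have D_card_upper: "real (card (D n)) < exp (real n * (h + \<epsilon>))" if "M \<le> n" "1 \<le> n" for n
  proof -
    have "real (card (D n)) \<le> real (card (C n))"
      using D_C C_words finite_words[OF finite_alphabet] that by (meson card_mono finite_subset of_nat_mono)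
    also have "\<dots> < exp (real n * (h + \<delta>))"
      using C_card \<open>N \<le> M\<close> that by auto
    also have "\<dots> \<le> exp (real n * (h + \<epsilon>))"
      using \<open>\<delta> \<le> \<epsilon>\<close> by (simp add: mult_left_mono)
    finally show ?thesis .
  qed
  have D_card_lower: "exp (real n * (h - \<epsilon>)) < real (card (D n))" if "M \<le> n" "1 \<le> n" for n
    using D_point_\<delta> D_finite D_mass that by (intro card_gt_of_marg_gt) auto
  show ?thesis
    unfolding Bstar_props_def
    using D_C C_words D_prefix D_card_lower D_card_upper D_point D_large by blast
qed

lemma marg_windows_heavy_paths_ge:
  assumes C: "Bstar_props P A h \<delta> C N"
    and "N \<le> M" "1 \<le> M" "\<delta> < \<epsilon>"
  defines "G \<equiv> \<lambda>n. {x \<in> C n. M \<le> n \<longrightarrow> exp (- real n * (h + \<epsilon>)) < marg P n {x}}"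
    and "q \<equiv> exp (- (\<epsilon> - \<delta>))"
  shows "1 - \<delta> - q ^ M / (1 - q) \<le> marg P n ((\<lambda>\<omega>. window \<omega> n) ` paths_through G)"
proof -
  have C_words: "\<And>n. 1 \<le> n \<Longrightarrow> C n \<subseteq> words A n"
    and C_prefix: "\<And>n. 1 \<le> n \<Longrightarrow> C n = butlast ` C (Suc n)"
    and C_card: "\<And>n. N \<le> n \<Longrightarrow> 1 \<le> n \<Longrightarrow> real (card (C n)) < exp (real n * (h + \<delta>))"
    and C_large: "\<And>n. 1 \<le> n \<Longrightarrow> 1 - \<delta> < marg P n (C n)"
    using C unfolding Bstar_props_def by blast+
  have C_finite: "\<And>n. 1 \<le> n \<Longrightarrow> finite (C n)"
    using C_words finite_words[OF finite_alphabet] by (meson finite_subset)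
  have C_prefix_closed: "\<And>n. 1 \<le> n \<Longrightarrow> butlast ` C (Suc n) \<subseteq> C n"
    using C_prefix by blast
  have q: "0 < q" "q < 1"
    using \<open>\<delta> < \<epsilon>\<close> by (auto simp: q_def)
  have "real (card (C n)) * exp (- real n * (h + \<epsilon>)) \<le> q ^ n" if "M \<le> n" for n
  proof -
    have "real (card (C n)) * exp (- real n * (h + \<epsilon>))
        \<le> exp (real n * (h + \<delta>)) * exp (- real n * (h + \<epsilon>))"
      using C_card[of n] assms(2,3) that by (intro mult_right_mono) auto
    also have "\<dots> = q ^ n"
      by (simp add: q_def exp_of_nat_mult[symmetric] exp_add[symmetric] algebra_simps)
    finally show ?thesis .
  qed
  then have "1 - \<delta> - q ^ M / (1 - q) \<le> prob (paths_through G)"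
    unfolding G_def using C_finite \<open>1 \<le> M\<close> q
    by (intro prob_paths_through_heavy_ge[OF C_prefix_closed C_large]) auto
  then show ?thesis
    using prob_paths_through_le_marg[of G n] by linarith
qed

lemma Bstar_props_equipartition:
  assumes C: "Bstar_props P A h \<delta> C N"
    and \<delta>: "0 < \<delta>" "2 * \<delta> < \<epsilon>" "2 * \<delta> < 1"
  shows "\<exists>D M. Bstar_props P A h \<epsilon> D M \<and>
           (\<forall>n\<ge>M. n \<ge> 1 \<longrightarrow> (\<forall>x\<in>D n.
              exp (- real n * (h + \<epsilon>)) < marg P n {x} \<and>
              marg P n {x} < exp (- real n * (h - \<epsilon>))))"
proof -
  define q where "q = exp (- (\<epsilon> - \<delta>))"
  have q: "0 < q" "q < 1"
    using \<delta> by (auto simp: q_def)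
  have "\<forall>\<^sub>F m in sequentially. N \<le> m \<and> 1 \<le> m \<and> q ^ m < \<delta> * (1 - q) \<and> q ^ m < 1 - 2 * \<delta>"
    using q \<delta> by (intro eventually_conj eventually_ge_at_top order_tendstoD(2)[OF LIMSEQ_power_zero])
      auto
  then obtain M where M: "N \<le> M" "1 \<le> M" "q ^ M < \<delta> * (1 - q)" "q ^ M < 1 - 2 * \<delta>"
    unfolding eventually_sequentially by blast
  define G where "G n = {x \<in> C n. M \<le> n \<longrightarrow> exp (- real n * (h + \<epsilon>)) < marg P n {x}}" for n
  define D where "D n = (\<lambda>\<omega>. window \<omega> n) ` paths_through G" for n
  have D_G: "\<And>n. 1 \<le> n \<Longrightarrow> D n \<subseteq> G n"
    unfolding D_def by (rule windows_paths_through_subset)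
  have D_large: "1 - 2 * \<delta> \<le> marg P n (D n)" for n
  proof -
    have "q ^ M / (1 - q) \<le> \<delta>"
      using M q by (simp add: field_simps)
    moreover have "1 - \<delta> - q ^ M / (1 - q) \<le> marg P n (D n)"
      unfolding D_def G_def q_def using C M(1,2) \<delta> by (intro marg_windows_heavy_paths_ge) auto
    ultimately show ?thesis
      by linarith
  qed
  have D: "Bstar_props P A h \<epsilon> D M"
  proof (rule Bstar_props_subfamily[OF C])
    show "\<And>n. 1 \<le> n \<Longrightarrow> D n \<subseteq> C n"
      using D_G by (auto simp: G_def)
    show "\<And>n. D n = butlast ` D (Suc n)"
      by (simp add: D_def butlast_image_windows)
    show "1 - \<epsilon> < marg P n (D n)" for n
      using D_large[of n] \<delta> by linarith
    show "exp (- real n * (\<epsilon> - \<delta>)) < marg P n (D n)" if "M \<le> n" for n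
    proof -
      have "exp (- real n * (\<epsilon> - \<delta>)) = q ^ n"
        by (simp add: q_def exp_of_nat_mult[symmetric] algebra_simps)
      also have "\<dots> \<le> q ^ M"
        using q by (intro power_decreasing[OF that]) auto
      finally show ?thesis
        using M(4) D_large[of n] by linarith
    qed
  qed (use M \<delta> in auto)
  moreover have "exp (- real n * (h + \<epsilon>)) < marg P n {x}" if "M \<le> n" "1 \<le> n" "x \<in> D n" for n x
    using subsetD[OF D_G[OF that(2)] that(3)] that(1) by (simp add: G_def)
  moreover have "marg P n {x} < exp (- real n * (h - \<epsilon>))" if "M \<le> n" "1 \<le> n" "x \<in> D n" for n x
    using D that unfolding Bstar_props_def by blast
  ultimately show ?thesis
    by blast
qed

end

theorem mainTheorem2:
  fixes A :: "'a set" and h :: real and P :: "(int \<Rightarrow> 'a) measure"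
  assumes "finite A" and "h \<ge> 0"
    and "prob_space P"
    and "sets P = sets (PiM (UNIV :: int set) (\<lambda>_. count_space A))"
    and "space P = space (PiM (UNIV :: int set) (\<lambda>_. count_space A))"
    and "condition_Bstar P A h"
  shows "\<forall>\<epsilon>>0. \<exists>C N. Bstar_props P A h \<epsilon> C N \<and>
           (\<forall>n\<ge>N. n \<ge> 1 \<longrightarrow> (\<forall>x\<in>C n.
              exp (- real n * (h + \<epsilon>)) < marg P n {x} \<and>
              marg P n {x} < exp (- real n * (h - \<epsilon>))))"
proof (intro allI impI)
  fix \<epsilon> :: real
  assume "0 < \<epsilon>"
  interpret prob_on_sequences P A
    using assms by (simp add: prob_on_sequences_def prob_on_sequences_axioms_def)
  define \<delta> where "\<delta> = min \<epsilon> 1 / 3"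
  have \<delta>: "0 < \<delta>" "2 * \<delta> < \<epsilon>" "2 * \<delta> < 1"
    using \<open>0 < \<epsilon>\<close> by (auto simp: \<delta>_def)
  then obtain C N where "Bstar_props P A h \<delta> C N"
    using assms(6) unfolding condition_Bstar_def by blast
  then show "\<exists>C N. Bstar_props P A h \<epsilon> C N \<and>
           (\<forall>n\<ge>N. n \<ge> 1 \<longrightarrow> (\<forall>x\<in>C n.
              exp (- real n * (h + \<epsilon>)) < marg P n {x} \<and>
              marg P n {x} < exp (- real n * (h - \<epsilon>))))"
    using \<delta> by (rule Bstar_props_equipartition)
qed

end
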